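(* For all complex $q$ with $|q|<1$, $$F^{\rm od}_{\rm ed}(q)=\frac{q\,(-q;q^2)_\infty}{1-q}\left(1-\frac{(-q^2;q^2)_\infty}{(-q;q^2)_\infty}\right).$$
   Context: For $n\in\mathbb N_0\cup\{\infty\}$, $(a;q)_n:=\prod_{j=0}^{n-1}(1-aq^j)$. Define $$F^{\rm od}_{\rm ed}(q):=\sum_{n=0}^\infty q^{2n+2}(-q^2;q^2)_n(-q^{2n+3};q^2)_\infty,$$ the generating function for partitions into at least one even part, with even parts distinct, and odd parts distinct and all larger than every even part. *)

theory Defs
  imports "HOL-Analysis.Analysis"
begin

definition qpoch :: "complex \<Rightarrow> complex \<Rightarrow> nat \<Rightarrow> complex" where
  "qpoch a q n = (\<Prod>j<n. 1 - a * q ^ j)"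

definition qpoch_inf :: "complex \<Rightarrow> complex \<Rightarrow> complex" where
  "qpoch_inf a q = (\<Prod>j. 1 - a * q ^ j)"

definition F_od_ed :: "complex \<Rightarrow> complex" where
  "F_od_ed q = (\<Sum>n. q ^ (2*n+2) * qpoch (- (q^2)) (q^2) n * qpoch_inf (- (q^(2*n+3))) (q^2))"

end

theory Submission
  imports Defs
begin

text \<open>
  Put \<open>A\<^sub>n = (c;b)\<^sub>n (a b\<^sup>n;b)\<^sub>\<infinity>\<close>. Peeling one factor off each product gives
  \<open>A\<^sub>n - A\<^sub>n\<^sub>+\<^sub>1 = (c - a) b\<^sup>n (c;b)\<^sub>n (a b\<^sup>n\<^sup>+\<^sup>1;b)\<^sub>\<infinity>\<close>, while \<open>A\<^sub>0 = (a;b)\<^sub>\<infinity>\<close> and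
  \<open>A\<^sub>n \<rightarrow> (c;b)\<^sub>\<infinity>\<close>. Telescoping expresses \<open>(a;b)\<^sub>\<infinity> - (c;b)\<^sub>\<infinity>\<close> as a series.
  For \<open>a = -q\<close>, \<open>b = q\<^sup>2\<close>, \<open>c = -q\<^sup>2\<close> that series is \<open>(1 - q)/q\<close> times the series
  defining \<open>F\<^sup>o\<^sup>d\<^sub>e\<^sub>d(q)\<close>.
\<close>

lemma convergent_prod_qpoch:
  fixes a b :: complex
  assumes "norm b < 1"
  shows "convergent_prod (\<lambda>j. 1 - a * b ^ j)"
proof -
  have "summable (\<lambda>j. norm a * norm b ^ j)"
    using assms by (intro summable_mult summable_geometric) auto
  then have "summable (\<lambda>j. norm ((1 - a * b ^ j) - 1))"
    by (simp add: norm_mult norm_power)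
  then show ?thesis
    by (intro abs_convergent_prod_imp_convergent_prod summable_imp_abs_convergent_prod)
qed

lemma qpoch_LIMSEQ:
  fixes a b :: complex
  assumes "norm b < 1"
  shows "(\<lambda>n. qpoch a b n) \<longlonglongrightarrow> qpoch_inf a b"
  using convergent_prod_LIMSEQ[OF convergent_prod_qpoch[OF assms, of a]]
  unfolding qpoch_def qpoch_inf_def
  by (simp add: LIMSEQ_lessThan_iff_atMost)

lemma norm_mult_power_less_one:
  fixes a b :: complex
  assumes "norm a < 1" "norm b \<le> 1"
  shows "norm (a * b ^ n) < 1"
proof -
  have "norm (a * b ^ n) \<le> norm a"
    using assms by (simp add: norm_mult norm_power mult_left_le power_le_one)
  with assms(1) show ?thesis
    by simp
qed

lemma qpoch_factor_nonzero:
  fixes a b :: complex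
  assumes "norm a < 1" "norm b \<le> 1"
  shows "1 - a * b ^ j \<noteq> 0"
  using norm_mult_power_less_one[OF assms, of j] by auto

lemma qpoch_nonzero:
  fixes a b :: complex
  assumes "norm a < 1" "norm b \<le> 1"
  shows "qpoch a b n \<noteq> 0"
  using qpoch_factor_nonzero[OF assms] by (simp add: qpoch_def)

lemma qpoch_inf_nonzero:
  fixes a b :: complex
  assumes "norm a < 1" "norm b < 1"
  shows "qpoch_inf a b \<noteq> 0"
  unfolding qpoch_inf_def
  using assms by (intro prodinf_nonzero convergent_prod_qpoch qpoch_factor_nonzero) auto

lemma qpoch_Suc:
  "qpoch a b (Suc n) = qpoch a b n * (1 - a * b ^ n)"
  by (simp add: qpoch_def)

lemma qpoch_inf_split:
  fixes a b :: complex
  assumes "norm a < 1" "norm b < 1"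
  shows "qpoch_inf a b = qpoch a b n * qpoch_inf (a * b ^ n) b"
proof -
  have "qpoch_inf a b = (\<Prod>i. 1 - a * b ^ (i + n)) * qpoch a b n"
    unfolding qpoch_inf_def qpoch_def using assms
    by (intro prodinf_split_initial_segment convergent_prod_qpoch qpoch_factor_nonzero) auto
  then show ?thesis
    by (simp add: qpoch_inf_def power_add algebra_simps)
qed

lemma qpoch_inf_unfold:
  fixes a b :: complex
  assumes "norm a < 1" "norm b < 1"
  shows "qpoch_inf a b = (1 - a) * qpoch_inf (a * b) b"
  using qpoch_inf_split[OF assms, of 1] by (simp add: qpoch_def)

lemma qpoch_inf_tail_LIMSEQ:
  fixes a b :: complex
  assumes "norm a < 1" "norm b < 1"
  shows "(\<lambda>n. qpoch_inf (a * b ^ n) b) \<longlonglongrightarrow> 1"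
proof -
  have "(\<lambda>n. qpoch_inf a b / qpoch a b n) \<longlonglongrightarrow> qpoch_inf a b / qpoch_inf a b"
    using assms by (intro tendsto_divide tendsto_const qpoch_LIMSEQ qpoch_inf_nonzero)
  moreover have "qpoch_inf a b / qpoch a b n = qpoch_inf (a * b ^ n) b" for n
    using qpoch_inf_split[OF assms, of n] qpoch_nonzero[of a b n] assms by simp
  ultimately show ?thesis
    using qpoch_inf_nonzero[OF assms] by simp
qed

lemma qpoch_inf_diff_sums:
  fixes a b c :: complex
  assumes "norm a < 1" "norm b < 1"
  shows "(\<lambda>n. (c - a) * b ^ n * qpoch c b n * qpoch_inf (a * b ^ Suc n) b)
           sums (qpoch_inf a b - qpoch_inf c b)"
proof -
  define A where "A n = qpoch c b n * qpoch_inf (a * b ^ n) b" for n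
  have unfold: "qpoch_inf (a * b ^ n) b = (1 - a * b ^ n) * qpoch_inf (a * b ^ Suc n) b" for n
    using qpoch_inf_unfold[of "a * b ^ n" b] norm_mult_power_less_one[of a b n] assms
    by (simp add: algebra_simps)
  have "A n - A (Suc n) = (c - a) * b ^ n * qpoch c b n * qpoch_inf (a * b ^ Suc n) b" for n
    unfolding A_def qpoch_Suc unfold[of n] by (simp add: algebra_simps)
  moreover have "A \<longlonglongrightarrow> qpoch_inf c b * 1"
    unfolding A_def using assms by (intro tendsto_mult qpoch_LIMSEQ qpoch_inf_tail_LIMSEQ)
  then have "(\<lambda>n. A n - A (Suc n)) sums (A 0 - qpoch_inf c b)"
    by (intro telescope_sums') simp
  moreover have "A 0 = qpoch_inf a b"
    by (simp add: A_def qpoch_def)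
  ultimately show ?thesis
    by simp
qed

theorem theorem1p1:
  fixes q :: complex
  assumes "norm q < 1"
  shows "F_od_ed q = q * qpoch_inf (- q) (q^2) / (1 - q)
           * (1 - qpoch_inf (- (q^2)) (q^2) / qpoch_inf (- q) (q^2))"
proof -
  define P where "P = qpoch_inf (- q) (q^2)"
  define E where "E = qpoch_inf (- (q^2)) (q^2)"
  have q2: "norm (q^2) < 1"
    using assms by (simp add: norm_power power_less_one_iff)
  have "q \<noteq> 1"
    using assms by auto
  have "P \<noteq> 0"
    unfolding P_def using assms q2 by (intro qpoch_inf_nonzero) auto
  have "(\<lambda>n. q / (1 - q) * ((- (q^2) - - q) * (q^2) ^ n * qpoch (- (q^2)) (q^2) n
                              * qpoch_inf (- q * (q^2) ^ Suc n) (q^2)))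
          sums (q / (1 - q) * (P - E))"
    unfolding P_def E_def
    by (intro sums_mult qpoch_inf_diff_sums) (use assms q2 in auto)
  moreover have "q / (1 - q) * ((- (q^2) - - q) * (q^2) ^ n * X) = q ^ (2*n+2) * X" for n X
    using \<open>q \<noteq> 1\<close> by (simp add: field_simps power_mult power2_eq_square)
  moreover have "- q * (q^2) ^ Suc n = - (q ^ (2*n+3))" for n
    by (simp flip: power_mult add: power_add eval_nat_numeral power_mult_distrib)
  ultimately have "F_od_ed q = q / (1 - q) * (P - E)"
    unfolding F_od_ed_def by (simp add: sums_iff mult.assoc)
  also have "\<dots> = q * P / (1 - q) * (1 - E / P)"
    using \<open>P \<noteq> 0\<close> \<open>q \<noteq> 1\<close> by (simp add: field_simps)
  finally show ?thesis
    unfolding P_def E_def .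
qed

end
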